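(* Let $u = v$ be a context equation over a ranked signature $\Sigma$ whose letters have maximal arity $k$. Then (1) for every solution $\sigma$ of $u=v$ there is a solution $\sigma'$ that is a simpler equivalent of $\sigma$ such that for each $k'=0,1,\dots,k$, $\sigma'$ uses at most one letter of arity $k'$ that does not occur in $u=v$; (2) for every solution $\sigma$ there exists a solution $\sigma'$ that uses only unary letters occurring in $u = v$ and satisfies $|\sigma'(u)|\le|\sigma(u)|$.
   Context: $\Omega$ is a special constant not in $\Sigma$; context variables have arity $1$, variables arity $0$. Ground terms are finite ordered trees over $\Sigma$ with each node labelled $f$ having $\mathrm{ar}(f)$ children; ground contexts are ground terms over $\Sigma\cup\{\Omega\}$ with exactly one $\Omega$; $st$ replaces $\Omega$ in the ground context $s$ by $t$. Terms are well-formed trees over $\Sigma$, variables and context variables; a context equation is $u=v$ with $u,v$ terms. A substitution $\sigma$ assigns a ground context to each context variable and a ground term to each variable, extended by $\sigma(a)=a$, $\sigma(f(t_1,\dots,t_m))=f(\sigma(t_1),\dots,\sigma(t_m))$, $\sigma(Xt)=\sigma(X)\sigma(t)$; it is a solution if $\sigma(u)=\sigma(v)$. A letter is used by $\sigma$ if it occurs in some $\sigma(X)$ or $\sigma(x)$. For solutions $\sigma,\sigma'$, $\sigma'$ is a simpler equivalent of $\sigma$ if there is an arity-preserving map $h$ on letters such that each $\sigma'(X)$, $\sigma'(x)$ is obtained from $\sigma(X)$, $\sigma(x)$ by replacing every letter $a$ by $h(a)$. $|\cdot|$ is the number of nodes. Unary letters have arity $1$. *)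

theory Defs
  imports Main
begin

text \<open>Ground terms over the signature are
  trees labelled by letters of type 'f; ground contexts are trees labelled by
  'f option, where None plays the role of the special constant Omega.\<close>

datatype 'f gterm = GFun 'f "'f gterm list"

fun wf_gt :: "'a set \<Rightarrow> ('a \<Rightarrow> nat) \<Rightarrow> 'a gterm \<Rightarrow> bool" where
  "wf_gt S ar (GFun f ts) = (f \<in> S \<and> length ts = ar f \<and> (\<forall>t\<in>set ts. wf_gt S ar t))"

fun gsize :: "'a gterm \<Rightarrow> nat" where
  "gsize (GFun f ts) = 1 + sum_list (map gsize ts)"

fun count_label :: "'a \<Rightarrow> 'a gterm \<Rightarrow> nat" where
  "count_label a (GFun f ts) = (if f = a then 1 else 0) + sum_list (map (count_label a) ts)"

definition ground_term :: "'f set \<Rightarrow> ('f \<Rightarrow> nat) \<Rightarrow> 'f gterm \<Rightarrow> bool" where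
  "ground_term Sg ar t = wf_gt Sg ar t"

definition ground_ctx :: "'f set \<Rightarrow> ('f \<Rightarrow> nat) \<Rightarrow> 'f option gterm \<Rightarrow> bool" where
  "ground_ctx Sg ar C =
     (wf_gt (Some ` Sg \<union> {None}) (case_option 0 ar) C \<and> count_label None C = 1)"

fun fill :: "'f option gterm \<Rightarrow> 'f gterm \<Rightarrow> 'f gterm" where
  "fill (GFun None ts) t = t"
| "fill (GFun (Some f) ts) t = GFun f (map (\<lambda>s. fill s t) ts)"

datatype ('f, 'x, 'c) trm = Fn 'f "('f, 'x, 'c) trm list" | Var 'x | CVar 'c "('f, 'x, 'c) trm"

fun wf_trm :: "'f set \<Rightarrow> ('f \<Rightarrow> nat) \<Rightarrow> ('f, 'x, 'c) trm \<Rightarrow> bool" where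
  "wf_trm S ar (Fn f ts) = (f \<in> S \<and> length ts = ar f \<and> (\<forall>t\<in>set ts. wf_trm S ar t))"
| "wf_trm S ar (Var x) = True"
| "wf_trm S ar (CVar X t) = wf_trm S ar t"

fun letters :: "('f, 'x, 'c) trm \<Rightarrow> 'f set" where
  "letters (Fn f ts) = insert f (\<Union>t\<in>set ts. letters t)"
| "letters (Var x) = {}"
| "letters (CVar X t) = letters t"

definition wf_subst :: "'f set \<Rightarrow> ('f \<Rightarrow> nat) \<Rightarrow> ('c \<Rightarrow> 'f option gterm) \<Rightarrow> ('x \<Rightarrow> 'f gterm) \<Rightarrow> bool" where
  "wf_subst Sg ar sc sv = ((\<forall>X. ground_ctx Sg ar (sc X)) \<and> (\<forall>x. ground_term Sg ar (sv x)))"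

fun apply_subst :: "('c \<Rightarrow> 'f option gterm) \<Rightarrow> ('x \<Rightarrow> 'f gterm) \<Rightarrow> ('f, 'x, 'c) trm \<Rightarrow> 'f gterm" where
  "apply_subst sc sv (Fn f ts) = GFun f (map (apply_subst sc sv) ts)"
| "apply_subst sc sv (Var x) = sv x"
| "apply_subst sc sv (CVar X t) = fill (sc X) (apply_subst sc sv t)"

definition is_solution :: "'f set \<Rightarrow> ('f \<Rightarrow> nat) \<Rightarrow> ('f, 'x, 'c) trm \<Rightarrow> ('f, 'x, 'c) trm
    \<Rightarrow> ('c \<Rightarrow> 'f option gterm) \<Rightarrow> ('x \<Rightarrow> 'f gterm) \<Rightarrow> bool" where
  "is_solution Sg ar u v sc sv =
     (wf_subst Sg ar sc sv \<and> apply_subst sc sv u = apply_subst sc sv v)"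

definition uses :: "('c \<Rightarrow> 'f option gterm) \<Rightarrow> ('x \<Rightarrow> 'f gterm) \<Rightarrow> 'f \<Rightarrow> bool" where
  "uses sc sv a = ((\<exists>X. Some a \<in> set_gterm (sc X)) \<or> (\<exists>x. a \<in> set_gterm (sv x)))"

definition simpler_equiv :: "'f set \<Rightarrow> ('f \<Rightarrow> nat)
    \<Rightarrow> ('c \<Rightarrow> 'f option gterm) \<Rightarrow> ('x \<Rightarrow> 'f gterm)
    \<Rightarrow> ('c \<Rightarrow> 'f option gterm) \<Rightarrow> ('x \<Rightarrow> 'f gterm) \<Rightarrow> bool" where
  "simpler_equiv Sg ar sc' sv' sc sv =
     (\<exists>h. (\<forall>a\<in>Sg. h a \<in> Sg \<and> ar (h a) = ar a)
        \<and> (\<forall>X. sc' X = map_gterm (map_option h) (sc X))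
        \<and> (\<forall>x. sv' x = map_gterm h (sv x)))"

end

theory Submission
  imports Defs
begin

text \<open>(1) Rename every letter of the solution that does not occur in the equation to a fixed
  representative of its arity outside the equation. Such a renaming commutes with filling
  and with applying the substitution to terms over the letters of the equation, so it maps
  solutions to solutions. (2) Erase every node labelled by a unary letter not occurring in the
  equation, i.e. replace it by its only child. This also commutes with filling and with
  substitution, never increases the size, and keeps exactly one hole in every context.\<close>

lemma set_gterm_subset_if_wf_gt: "wf_gt S ar t \<Longrightarrow> set_gterm t \<subseteq> S"
  by (induction t) auto

lemma wf_gt_map_gterm:
  "wf_gt S ar t \<Longrightarrow> \<forall>a\<in>S. h a \<in> S \<and> ar (h a) = ar a \<Longrightarrow> wf_gt S ar (map_gterm h t)"
  by (induction t) auto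

lemma count_label_None_map_gterm:
  "count_label None (map_gterm (map_option h) C) = count_label None C"
  by (induction C) (auto simp: comp_def intro!: arg_cong[where f=sum_list] split: option.splits)

lemma fill_map_gterm:
  "fill (map_gterm (map_option h) C) (map_gterm h t) = map_gterm h (fill C t)"
  by (induction C t rule: fill.induct) auto

lemma apply_subst_map_gterm:
  "\<forall>a\<in>letters t. h a = a \<Longrightarrow>
   apply_subst (\<lambda>X. map_gterm (map_option h) (sc X)) (\<lambda>x. map_gterm h (sv x)) t
     = map_gterm h (apply_subst sc sv t)"
  by (induction t) (auto simp: fill_map_gterm)

lemma wf_subst_map_gterm:
  assumes "wf_subst Sg ar sc sv" and h: "\<forall>a\<in>Sg. h a \<in> Sg \<and> ar (h a) = ar a"
  shows "wf_subst Sg ar (\<lambda>X. map_gterm (map_option h) (sc X)) (\<lambda>x. map_gterm h (sv x))"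
proof -
  have "\<forall>a\<in>Some ` Sg \<union> {None}. map_option h a \<in> Some ` Sg \<union> {None}
          \<and> case_option 0 ar (map_option h a) = case_option 0 ar a"
    using h by auto
  then show ?thesis
    using assms wf_gt_map_gterm[OF _ h] count_label_None_map_gterm
    unfolding wf_subst_def ground_ctx_def ground_term_def by (metis wf_gt_map_gterm)
qed

lemma is_solution_map_gterm:
  assumes "is_solution Sg ar u v sc sv"
    and "\<forall>a\<in>Sg. h a \<in> Sg \<and> ar (h a) = ar a"
    and "\<forall>a\<in>letters u \<union> letters v. h a = a"
  shows "is_solution Sg ar u v (\<lambda>X. map_gterm (map_option h) (sc X)) (\<lambda>x. map_gterm h (sv x))"
proof -
  have "apply_subst (\<lambda>X. map_gterm (map_option h) (sc X)) (\<lambda>x. map_gterm h (sv x)) u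
          = map_gterm h (apply_subst sc sv u)"
   and "apply_subst (\<lambda>X. map_gterm (map_option h) (sc X)) (\<lambda>x. map_gterm h (sv x)) v
          = map_gterm h (apply_subst sc sv v)"
    using assms(3) by (auto intro!: apply_subst_map_gterm)
  moreover have "wf_subst Sg ar (\<lambda>X. map_gterm (map_option h) (sc X)) (\<lambda>x. map_gterm h (sv x))"
    using assms(1,2) by (intro wf_subst_map_gterm) (simp_all add: is_solution_def)
  ultimately show ?thesis using assms(1) by (simp add: is_solution_def)
qed

lemma uses_map_gterm:
  assumes "wf_subst Sg ar sc sv"
    and "uses (\<lambda>X. map_gterm (map_option h) (sc X)) (\<lambda>x. map_gterm h (sv x)) a"
  shows "a \<in> h ` Sg"
  using assms(2) unfolding uses_def gterm.set_map
proof (elim disjE exE)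
  fix X assume "Some a \<in> map_option h ` set_gterm (sc X)"
  moreover have "set_gterm (sc X) \<subseteq> Some ` Sg \<union> {None}"
    using assms(1) set_gterm_subset_if_wf_gt unfolding wf_subst_def ground_ctx_def by blast
  ultimately show ?thesis by auto
next
  fix x assume "a \<in> h ` set_gterm (sv x)"
  moreover have "set_gterm (sv x) \<subseteq> Sg"
    using assms(1) set_gterm_subset_if_wf_gt unfolding wf_subst_def ground_term_def by blast
  ultimately show ?thesis by auto
qed

text \<open>The representative chosen for a letter outside L depends on the letter only through
  its arity; this is what makes the renamed solution use one fresh letter per arity.\<close>

definition collapse_fresh :: "'f set \<Rightarrow> 'f set \<Rightarrow> ('f \<Rightarrow> nat) \<Rightarrow> 'f \<Rightarrow> 'f" where
  "collapse_fresh L Sg ar a =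
     (if a \<in> L \<or> a \<notin> Sg then a else (SOME b. b \<in> Sg \<and> ar b = ar a \<and> b \<notin> L))"

lemma collapse_fresh_fixes: "a \<in> L \<Longrightarrow> collapse_fresh L Sg ar a = a"
  by (simp add: collapse_fresh_def)

lemma collapse_fresh_fresh:
  assumes "a \<in> Sg" "a \<notin> L"
  shows "collapse_fresh L Sg ar a \<in> Sg \<and> ar (collapse_fresh L Sg ar a) = ar a
         \<and> collapse_fresh L Sg ar a \<notin> L"
proof -
  have "\<exists>b. b \<in> Sg \<and> ar b = ar a \<and> b \<notin> L" using assms by blast
  then have "(SOME b. b \<in> Sg \<and> ar b = ar a \<and> b \<notin> L) \<in> Sg
      \<and> ar (SOME b. b \<in> Sg \<and> ar b = ar a \<and> b \<notin> L) = ar a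
      \<and> (SOME b. b \<in> Sg \<and> ar b = ar a \<and> b \<notin> L) \<notin> L"
    by (rule someI_ex)
  with assms show ?thesis by (simp add: collapse_fresh_def)
qed

lemma collapse_fresh_arity:
  "a \<in> Sg \<Longrightarrow> collapse_fresh L Sg ar a \<in> Sg \<and> ar (collapse_fresh L Sg ar a) = ar a"
  by (cases "a \<in> L") (auto simp: collapse_fresh_fixes collapse_fresh_fresh)

lemma collapse_fresh_unique:
  assumes "a \<in> Sg" "b \<in> Sg"
    and "collapse_fresh L Sg ar a \<notin> L" "collapse_fresh L Sg ar b \<notin> L"
    and "ar (collapse_fresh L Sg ar a) = ar (collapse_fresh L Sg ar b)"
  shows "collapse_fresh L Sg ar a = collapse_fresh L Sg ar b"
proof -
  have "a \<notin> L" "b \<notin> L" using assms(3,4) collapse_fresh_fixes by metis+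
  then have "ar a = ar b" using assms collapse_fresh_fresh by metis
  then show ?thesis using assms(1,2) \<open>a \<notin> L\<close> \<open>b \<notin> L\<close> by (simp add: collapse_fresh_def)
qed

lemma solution_with_one_fresh_letter_per_arity:
  assumes sol: "is_solution Sg ar u v sc sv"
  obtains sc' sv' where "is_solution Sg ar u v sc' sv'" "simpler_equiv Sg ar sc' sv' sc sv"
    and "\<And>a b. uses sc' sv' a \<Longrightarrow> a \<notin> letters u \<union> letters v \<Longrightarrow>
               uses sc' sv' b \<Longrightarrow> b \<notin> letters u \<union> letters v \<Longrightarrow> ar a = ar b \<Longrightarrow> a = b"
proof
  let ?h = "collapse_fresh (letters u \<union> letters v) Sg ar"
  have h_arity: "\<forall>a\<in>Sg. ?h a \<in> Sg \<and> ar (?h a) = ar a"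
    by (simp add: collapse_fresh_arity)
  show "is_solution Sg ar u v (\<lambda>X. map_gterm (map_option ?h) (sc X)) (\<lambda>x. map_gterm ?h (sv x))"
    using is_solution_map_gterm[OF sol h_arity] by (simp add: collapse_fresh_fixes)
  show "simpler_equiv Sg ar (\<lambda>X. map_gterm (map_option ?h) (sc X)) (\<lambda>x. map_gterm ?h (sv x)) sc sv"
    unfolding simpler_equiv_def using h_arity by blast
  have wf: "wf_subst Sg ar sc sv" using sol by (simp add: is_solution_def)
  show "a = b"
    if "uses (\<lambda>X. map_gterm (map_option ?h) (sc X)) (\<lambda>x. map_gterm ?h (sv x)) a"
       "uses (\<lambda>X. map_gterm (map_option ?h) (sc X)) (\<lambda>x. map_gterm ?h (sv x)) b"
       "a \<notin> letters u \<union> letters v" "b \<notin> letters u \<union> letters v" "ar a = ar b" for a b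
    using uses_map_gterm[OF wf that(1)] uses_map_gterm[OF wf that(2)] that(3-5)
    by (auto intro: collapse_fresh_unique)
qed

function erase_unary :: "('a \<Rightarrow> bool) \<Rightarrow> 'a gterm \<Rightarrow> 'a gterm" where
  "erase_unary P (GFun f ts) =
     (if P f \<and> length ts = 1 then erase_unary P (hd ts) else GFun f (map (erase_unary P) ts))"
  by pat_completeness auto

lemma size_lt_size_list: "x \<in> set ts \<Longrightarrow> size x < Suc (size_list size ts)"
  by (induction ts) auto

termination
  by (relation "measure (\<lambda>(P, t). size t)") (auto simp: length_Suc_conv size_lt_size_list)

lemma wf_gt_erase_unary: "wf_gt S ar t \<Longrightarrow> wf_gt S ar (erase_unary P t)"
  by (induction t) (auto simp: length_Suc_conv)

lemma count_label_erase_unary: "\<not> P a \<Longrightarrow> count_label a (erase_unary P t) = count_label a t"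
  by (induction t) (auto simp: length_Suc_conv comp_def intro!: arg_cong[where f=sum_list])

lemma gsize_erase_unary: "gsize (erase_unary P t) \<le> gsize t"
proof (induction t)
  case (GFun f ts)
  show ?case
  proof (cases "P f \<and> length ts = 1")
    case True
    then obtain s where "ts = [s]" by (auto simp: length_Suc_conv)
    with GFun show ?thesis by auto
  next
    case False
    have "sum_list (map (gsize \<circ> erase_unary P) ts) \<le> sum_list (map gsize ts)"
      by (rule sum_list_mono) (use GFun in auto)
    with False show ?thesis by auto
  qed
qed

lemma set_gterm_erase_unary:
  "wf_gt S ar t \<Longrightarrow> \<forall>f. P f \<longrightarrow> ar f = 1 \<Longrightarrow> a \<in> set_gterm (erase_unary P t) \<Longrightarrow> \<not> P a"
  by (induction t) (auto simp: length_Suc_conv split: if_splits)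

lemma fill_erase_unary:
  "erase_unary P (fill C t) = fill (erase_unary (case_option False P) C) (erase_unary P t)"
  by (induction C t rule: fill.induct) (auto simp: length_Suc_conv comp_def)

lemma apply_subst_erase_unary:
  "\<forall>a\<in>letters t. \<not> P a \<Longrightarrow>
   erase_unary P (apply_subst sc sv t)
     = apply_subst (\<lambda>X. erase_unary (case_option False P) (sc X)) (\<lambda>x. erase_unary P (sv x)) t"
  by (induction t) (auto simp: fill_erase_unary)

lemma solution_without_fresh_unary_letters:
  assumes sol: "is_solution Sg ar u v sc sv"
  obtains sc' sv' where "is_solution Sg ar u v sc' sv'"
    and "\<And>a. uses sc' sv' a \<Longrightarrow> ar a = 1 \<Longrightarrow> a \<in> letters u \<union> letters v"
    and "gsize (apply_subst sc' sv' u) \<le> gsize (apply_subst sc sv u)"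
proof
  define P where "P a \<longleftrightarrow> ar a = 1 \<and> a \<notin> letters u \<union> letters v" for a
  let ?sc' = "\<lambda>X. erase_unary (case_option False P) (sc X)"
  let ?sv' = "\<lambda>x. erase_unary P (sv x)"
  have wf: "\<And>X. ground_ctx Sg ar (sc X)" "\<And>x. ground_term Sg ar (sv x)"
    using sol by (auto simp: is_solution_def wf_subst_def)
  have erase_u: "erase_unary P (apply_subst sc sv u) = apply_subst ?sc' ?sv' u"
    and erase_v: "erase_unary P (apply_subst sc sv v) = apply_subst ?sc' ?sv' v"
    by (auto intro!: apply_subst_erase_unary simp: P_def)
  have "count_label None (erase_unary (case_option False P) C) = count_label None C" for C
    by (simp add: count_label_erase_unary)
  then have "wf_subst Sg ar ?sc' ?sv'"
    using wf wf_gt_erase_unary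
    unfolding wf_subst_def ground_ctx_def ground_term_def by metis
  then show "is_solution Sg ar u v ?sc' ?sv'"
    using sol erase_u erase_v by (simp add: is_solution_def)
  show "gsize (apply_subst ?sc' ?sv' u) \<le> gsize (apply_subst sc sv u)"
    using gsize_erase_unary erase_u by metis
  show "a \<in> letters u \<union> letters v" if "uses ?sc' ?sv' a" "ar a = 1" for a
  proof -
    have "\<not> P a"
      using that(1) unfolding uses_def
    proof (elim disjE exE)
      fix X assume "Some a \<in> set_gterm (?sc' X)"
      then have "\<not> case_option False P (Some a)"
        using wf(1)[of X] unfolding ground_ctx_def
        by (intro set_gterm_erase_unary[of _ "case_option 0 ar" "sc X"])
           (auto simp: P_def split: option.splits)
      then show ?thesis by simp
    next
      fix x assume "a \<in> set_gterm (?sv' x)"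
      then show ?thesis
        using wf(2)[of x] unfolding ground_term_def
        by (intro set_gterm_erase_unary[of Sg ar "sv x"]) (auto simp: P_def[abs_def])
    qed
    with that(2) show ?thesis by (simp add: P_def)
  qed
qed

theorem lemma3p7:
  fixes Sg :: "'f set" and ar :: "'f \<Rightarrow> nat" and k :: nat
    and u v :: "('f, 'x, 'c) trm"
  assumes max_ar: "\<forall>a\<in>Sg. ar a \<le> k"
    and k_attained: "\<exists>a\<in>Sg. ar a = k"
    and wf_u: "wf_trm Sg ar u" and wf_v: "wf_trm Sg ar v"
  shows "(\<forall>sc sv. is_solution Sg ar u v sc sv \<longrightarrow>
            (\<exists>sc' sv'. is_solution Sg ar u v sc' sv'
               \<and> simpler_equiv Sg ar sc' sv' sc sv
               \<and> (\<forall>k'\<le>k. \<forall>a b.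
                    uses sc' sv' a \<and> ar a = k' \<and> a \<notin> letters u \<union> letters v \<and>
                    uses sc' sv' b \<and> ar b = k' \<and> b \<notin> letters u \<union> letters v
                    \<longrightarrow> a = b)))
       \<and> (\<forall>sc sv. is_solution Sg ar u v sc sv \<longrightarrow>
            (\<exists>sc' sv'. is_solution Sg ar u v sc' sv'
               \<and> (\<forall>a. uses sc' sv' a \<and> ar a = 1 \<longrightarrow> a \<in> letters u \<union> letters v)
               \<and> gsize (apply_subst sc' sv' u) \<le> gsize (apply_subst sc sv u)))"
proof (intro conjI allI impI)
  fix sc sv assume sol: "is_solution Sg ar u v sc sv"
  show "\<exists>sc' sv'. is_solution Sg ar u v sc' sv' \<and> simpler_equiv Sg ar sc' sv' sc sv
          \<and> (\<forall>k'\<le>k. \<forall>a b.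
               uses sc' sv' a \<and> ar a = k' \<and> a \<notin> letters u \<union> letters v \<and>
               uses sc' sv' b \<and> ar b = k' \<and> b \<notin> letters u \<union> letters v \<longrightarrow> a = b)"
    by (rule solution_with_one_fresh_letter_per_arity[OF sol]) (metis (no_types, lifting))
  show "\<exists>sc' sv'. is_solution Sg ar u v sc' sv'
          \<and> (\<forall>a. uses sc' sv' a \<and> ar a = 1 \<longrightarrow> a \<in> letters u \<union> letters v)
          \<and> gsize (apply_subst sc' sv' u) \<le> gsize (apply_subst sc sv u)"
    by (rule solution_without_fresh_unary_letters[OF sol]) blast
qed

end
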